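(* Let $\Lambda\subset\mathbb{C}$ be a lattice, $p,q\ge2$ integers, $r\ge1$, and $U(z)=\exp(\zeta(pqz,\Lambda)N_r)$. Then $$A_r^{sp}(z)=U(z/p)\,T_r^{sp}\,U(z)^{-1},\qquad T_r^{sp}=\mathrm{diag}[1,p,\dots,p^{r-1}].$$
   Context: $\zeta(z,\Lambda)$ is the Weierstrass zeta function of $\Lambda$; $N_r$ is the $r\times r$ matrix with $1$ at positions $(i,i+1)$ and $0$ elsewhere. $g_p(z)=p\zeta(qz,\Lambda)-\zeta(pqz,\Lambda)$. $A_r^{sp}(z)=(a_{ij})$ is the $r\times r$ matrix with $a_{ij}=0$ for $j<i$ and $a_{ij}=\frac{p^{i-1}}{(j-i)!}g_p(z)^{j-i}$ for $i\le j$. *)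

theory Defs
  imports "HOL-Analysis.Analysis" "Jordan_Normal_Form.Matrix" "Jordan_Normal_Form.Gauss_Jordan_Elimination"
begin

definition is_lattice :: "complex set \<Rightarrow> bool" where
  "is_lattice L \<longleftrightarrow> (\<exists>w1 w2. w1 \<noteq> 0 \<and> w2 / w1 \<notin> \<real> \<and>
      L = {of_int m * w1 + of_int n * w2 | m n. True})"

definition weierstrass_zeta :: "complex \<Rightarrow> complex set \<Rightarrow> complex" where
  "weierstrass_zeta z L =
     1 / z + (\<Sum>\<^sub>\<infinity> w \<in> L - {0}. 1 / (z - w) + 1 / w + z / w ^ 2)"

definition mat_exp :: "complex mat \<Rightarrow> complex mat" where
  "mat_exp A = mat (dim_row A) (dim_col A) (\<lambda>(i,j). \<Sum>k. (A ^\<^sub>m k) $$ (i,j) / fact k)"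

definition mat_inv :: "complex mat \<Rightarrow> complex mat" where
  "mat_inv A = the (mat_inverse A)"

definition nilp_N :: "nat \<Rightarrow> complex mat" where
  "nilp_N r = mat r r (\<lambda>(i,j). if j = i + 1 then 1 else 0)"

definition g_p :: "nat \<Rightarrow> nat \<Rightarrow> complex set \<Rightarrow> complex \<Rightarrow> complex" where
  "g_p p q L z = of_nat p * weierstrass_zeta (of_nat q * z) L
                 - weierstrass_zeta (of_nat p * of_nat q * z) L"

definition A_sp :: "nat \<Rightarrow> nat \<Rightarrow> nat \<Rightarrow> complex set \<Rightarrow> complex \<Rightarrow> complex mat" where
  "A_sp r p q L z = mat r r (\<lambda>(i,j). if j < i then 0
      else of_nat p ^ i / fact (j - i) * g_p p q L z ^ (j - i))"

definition T_sp :: "nat \<Rightarrow> nat \<Rightarrow> complex mat" where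
  "T_sp r p = mat r r (\<lambda>(i,j). if i = j then of_nat p ^ i else 0)"

definition U_mat :: "nat \<Rightarrow> nat \<Rightarrow> nat \<Rightarrow> complex set \<Rightarrow> complex \<Rightarrow> complex mat" where
  "U_mat r p q L z = mat_exp (weierstrass_zeta (of_nat p * of_nat q * z) L \<cdot>\<^sub>m nilp_N r)"

end

theory Submission
  imports Defs
begin

text \<open>Both sides are upper unitriangular Toeplitz matrices up to the diagonal factor
  \<open>T\<^sub>r\<^sup>s\<^sup>p\<close>. Writing \<open>E(c) = exp(c N\<^sub>r)\<close>, whose \<open>(i,j)\<close> entry is
  \<open>c\<^sup>j\<^sup>-\<^sup>i/(j-i)!\<close>, we have \<open>E(x) E(y) = E(x+y)\<close> by the binomial theorem, and
  \<open>E(a) T = T E(p a)\<close> because conjugating \<open>N\<^sub>r\<close> by \<open>T = diag[1,p,\<dots>,p\<^sup>r\<^sup>-\<^sup>1]\<close>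
  multiplies it by \<open>p\<close>. With \<open>a = \<zeta>(qz)\<close> and \<open>b = \<zeta>(pqz)\<close> the right-hand side is
  \<open>E(a) T E(-b) = T E(p a - b) = T E(g\<^sub>p(z))\<close>, which is \<open>A\<^sub>r\<^sup>s\<^sup>p(z)\<close>.
  The identity is purely algebraic.\<close>

lemma divided_power_binomial:
  fixes x y :: "'a::field_char_0"
  shows "(\<Sum>m\<le>n. x ^ m / fact m * (y ^ (n - m) / fact (n - m))) = (x + y) ^ n / fact n"
proof -
  have "(x + y) ^ n = (\<Sum>m\<le>n. of_nat (n choose m) * x ^ m * y ^ (n - m))"
    by (simp add: binomial_ring)
  also have "\<dots> = (\<Sum>m\<le>n. fact n * (x ^ m / fact m * (y ^ (n - m) / fact (n - m))))"
    by (rule sum.cong) (auto simp: binomial_fact)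
  also have "\<dots> = fact n * (\<Sum>m\<le>n. x ^ m / fact m * (y ^ (n - m) / fact (n - m)))"
    by (rule sum_distrib_left[symmetric])
  finally show ?thesis by simp
qed

definition exp_shift_mat :: "nat \<Rightarrow> 'a::field_char_0 \<Rightarrow> 'a mat" where
  "exp_shift_mat r c = mat r r (\<lambda>(i,j). if i \<le> j then c ^ (j - i) / fact (j - i) else 0)"

lemma exp_shift_mat_carrier [simp]: "exp_shift_mat r c \<in> carrier_mat r r"
  by (simp add: exp_shift_mat_def)

lemma exp_shift_mat_add: "exp_shift_mat r x * exp_shift_mat r y = exp_shift_mat r (x + y)"
proof (rule eq_matI)
  fix i j assume "i < dim_row (exp_shift_mat r (x + y))" "j < dim_col (exp_shift_mat r (x + y))"
  then have "i < r" "j < r" by (simp_all add: exp_shift_mat_def)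
  let ?e = "\<lambda>c n. c ^ n / fact n"
  have "(exp_shift_mat r x * exp_shift_mat r y) $$ (i, j) =
      (\<Sum>k\<in>{0..<r}. (if i \<le> k then ?e x (k - i) else 0) * (if k \<le> j then ?e y (j - k) else 0))"
    using \<open>i < r\<close> \<open>j < r\<close> by (simp add: exp_shift_mat_def scalar_prod_def)
  also have "\<dots> = (if i \<le> j then ?e (x + y) (j - i) else 0)"
  proof (cases "i \<le> j")
    case True
    have "(\<Sum>k\<in>{0..<r}. (if i \<le> k then ?e x (k - i) else 0) * (if k \<le> j then ?e y (j - k) else 0))
        = (\<Sum>k\<in>{i..j}. ?e x (k - i) * ?e y (j - k))"
      using \<open>j < r\<close> by (intro sum.mono_neutral_cong_right) auto
    also have "\<dots> = (\<Sum>m\<le>j - i. ?e x m * ?e y (j - i - m))"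
      by (rule sum.reindex_bij_witness[where i="\<lambda>m. m + i" and j="\<lambda>k. k - i"]) (use True in auto)
    also have "\<dots> = ?e (x + y) (j - i)"
      by (rule divided_power_binomial)
    finally show ?thesis using True by simp
  qed (auto intro!: sum.neutral)
  also have "\<dots> = exp_shift_mat r (x + y) $$ (i, j)"
    using \<open>i < r\<close> \<open>j < r\<close> by (simp add: exp_shift_mat_def)
  finally show "(exp_shift_mat r x * exp_shift_mat r y) $$ (i, j) = exp_shift_mat r (x + y) $$ (i, j)" .
qed (auto simp: exp_shift_mat_def)

lemma exp_shift_mat_zero [simp]: "exp_shift_mat r 0 = 1\<^sub>m r"
  by (rule eq_matI) (auto simp: exp_shift_mat_def)

lemma dim_nilp_N [simp]: "dim_row (nilp_N r) = r" "dim_col (nilp_N r) = r"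
  by (simp_all add: nilp_N_def)

lemma index_nilp_N [simp]: "i < r \<Longrightarrow> j < r \<Longrightarrow> nilp_N r $$ (i,j) = (if j = i + 1 then 1 else 0)"
  by (simp add: nilp_N_def)

lemma smult_nilp_N_power:
  "(c \<cdot>\<^sub>m nilp_N r) ^\<^sub>m k = mat r r (\<lambda>(i,j). if j = i + k then c ^ k else 0)"
proof (induction k)
  case 0
  then show ?case by auto
next
  case (Suc k)
  show ?case
  proof (rule eq_matI)
    fix i j assume "i < dim_row (mat r r (\<lambda>(i,j). if j = i + Suc k then c ^ Suc k else 0))"
      and "j < dim_col (mat r r (\<lambda>(i,j). if j = i + Suc k then c ^ Suc k else 0))"
    then have ij: "i < r" "j < r" by simp_all
    have "((c \<cdot>\<^sub>m nilp_N r) ^\<^sub>m Suc k) $$ (i, j) =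
        (\<Sum>l\<in>{0..<r}. ((c \<cdot>\<^sub>m nilp_N r) ^\<^sub>m k) $$ (i,l) * (c \<cdot>\<^sub>m nilp_N r) $$ (l,j))"
      using ij by (simp add: scalar_prod_def)
    also have "\<dots> = (\<Sum>l\<in>{0..<r}. if l = i + k then (if j = Suc (i + k) then c ^ Suc k else 0) else 0)"
      using ij by (intro sum.cong) (auto simp: Suc.IH)
    also have "\<dots> = (if j = i + Suc k then c ^ Suc k else 0)"
      using ij by auto
    finally show "((c \<cdot>\<^sub>m nilp_N r) ^\<^sub>m Suc k) $$ (i, j) =
        mat r r (\<lambda>(i,j). if j = i + Suc k then c ^ Suc k else 0) $$ (i, j)"
      using ij by simp
  qed (auto simp: Suc)
qed

lemma mat_exp_smult_nilp_N: "mat_exp (c \<cdot>\<^sub>m nilp_N r) = exp_shift_mat r c"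
proof (rule eq_matI)
  fix i j assume ij: "i < dim_row (exp_shift_mat r c)" "j < dim_col (exp_shift_mat r c)"
  \<comment> \<open>the exponential series has a single nonzero term, the one with \<open>k = j - i\<close>\<close>
  have "(\<Sum>k. (if j = i + k then c ^ k else 0) / fact k) =
      (if i \<le> j then c ^ (j - i) / fact (j - i) else 0)"
  proof (cases "i \<le> j")
    case True
    then have "(\<lambda>k. (if j = i + k then c ^ k else 0) / fact k) =
        (\<lambda>k. if k = j - i then c ^ k / fact k else 0)"
      by auto
    then show ?thesis
      using True sums_single[of "j - i" "\<lambda>k. c ^ k / fact k"] by (simp add: sums_iff)
  qed simp
  then show "mat_exp (c \<cdot>\<^sub>m nilp_N r) $$ (i, j) = exp_shift_mat r c $$ (i, j)"
    using ij by (simp add: mat_exp_def smult_nilp_N_power exp_shift_mat_def)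
qed (auto simp: mat_exp_def exp_shift_mat_def)

lemma mat_inv_eqI:
  assumes A: "A \<in> carrier_mat n n" and AB: "A * B = 1\<^sub>m n" and BA: "B * A = 1\<^sub>m n"
  shows "mat_inv A = B"
proof -
  have "dim_row B = n" using BA by (metis index_mult_mat(2) index_one_mat(2))
  moreover have "dim_col B = n" using AB by (metis index_mult_mat(3) index_one_mat(3))
  ultimately have Bc: "B \<in> carrier_mat n n" by blast
  then have "A \<in> Units (ring_mat TYPE(complex) n undefined)"
    using A AB BA by (auto simp: Units_def ring_mat_simps)
  then obtain C where C: "mat_inverse A = Some C"
    using mat_inverse(1)[OF A] by fastforce
  then have CA: "C * A = 1\<^sub>m n" and Cc: "C \<in> carrier_mat n n"
    using mat_inverse(2)[OF A] by auto
  have "C = C * (A * B)" using AB Cc by simp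
  also have "\<dots> = (C * A) * B" using A Bc Cc by (simp add: assoc_mult_mat)
  also have "\<dots> = B" using CA Bc by simp
  finally show ?thesis using C by (simp add: mat_inv_def)
qed

lemma mat_inv_exp_shift_mat: "mat_inv (exp_shift_mat r b) = exp_shift_mat r (- b)"
  by (rule mat_inv_eqI[of _ r]) (simp_all add: exp_shift_mat_add)

lemma mult_T_sp:
  assumes "M \<in> carrier_mat r r"
  shows "M * T_sp r p = mat r r (\<lambda>(i,j). M $$ (i,j) * of_nat p ^ j)"
proof (rule eq_matI)
  fix i j assume "i < dim_row (mat r r (\<lambda>(i,j). M $$ (i,j) * of_nat p ^ j))"
    and "j < dim_col (mat r r (\<lambda>(i,j). M $$ (i,j) * of_nat p ^ j))"
  then have ij: "i < r" "j < r" by simp_all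
  have "(\<Sum>k\<in>{0..<r}. M $$ (i,k) * (if k = j then of_nat p ^ k else 0)) = M $$ (i,j) * of_nat p ^ j"
    using ij by (simp add: if_distrib cong: if_cong)
  then show "(M * T_sp r p) $$ (i, j) = mat r r (\<lambda>(i,j). M $$ (i,j) * of_nat p ^ j) $$ (i, j)"
    using ij assms by (simp add: T_sp_def scalar_prod_def)
qed (use assms in \<open>auto simp: T_sp_def\<close>)

lemma T_sp_mult:
  assumes "M \<in> carrier_mat r r"
  shows "T_sp r p * M = mat r r (\<lambda>(i,j). of_nat p ^ i * M $$ (i,j))"
proof (rule eq_matI)
  fix i j assume "i < dim_row (mat r r (\<lambda>(i,j). of_nat p ^ i * M $$ (i,j)))"
    and "j < dim_col (mat r r (\<lambda>(i,j). of_nat p ^ i * M $$ (i,j)))"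
  then have ij: "i < r" "j < r" by simp_all
  have "(\<Sum>k\<in>{0..<r}. (if i = k then of_nat p ^ i else 0) * M $$ (k,j)) = of_nat p ^ i * M $$ (i,j)"
    using ij by (simp add: if_distrib[of "\<lambda>x. x * _"] cong: if_cong)
  then show "(T_sp r p * M) $$ (i, j) = mat r r (\<lambda>(i,j). of_nat p ^ i * M $$ (i,j)) $$ (i, j)"
    using ij assms by (simp add: T_sp_def scalar_prod_def)
qed (use assms in \<open>auto simp: T_sp_def\<close>)

lemma exp_shift_mat_mult_T_sp:
  "exp_shift_mat r a * T_sp r p = T_sp r p * exp_shift_mat r (of_nat p * a)"
  unfolding mult_T_sp[OF exp_shift_mat_carrier] T_sp_mult[OF exp_shift_mat_carrier]
proof (rule eq_matI)
  fix i j assume "i < dim_row (mat r r (\<lambda>(i, j). of_nat p ^ i * exp_shift_mat r (of_nat p * a) $$ (i, j)))"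
    and "j < dim_col (mat r r (\<lambda>(i, j). of_nat p ^ i * exp_shift_mat r (of_nat p * a) $$ (i, j)))"
  then have ij: "i < r" "j < r" by simp_all
  have "i \<le> j \<Longrightarrow> (of_nat p :: complex) ^ j = of_nat p ^ i * of_nat p ^ (j - i)"
    by (metis le_add_diff_inverse power_add)
  then show "mat r r (\<lambda>(i, j). exp_shift_mat r a $$ (i, j) * of_nat p ^ j) $$ (i, j) =
      mat r r (\<lambda>(i, j). of_nat p ^ i * exp_shift_mat r (of_nat p * a) $$ (i, j)) $$ (i, j)"
    using ij by (simp add: exp_shift_mat_def power_mult_distrib)
qed auto

lemma A_sp_eq_T_sp_mult_exp_shift_mat:
  "A_sp r p q L z = T_sp r p * exp_shift_mat r (g_p p q L z)"
  unfolding T_sp_mult[OF exp_shift_mat_carrier]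
  by (rule eq_matI) (auto simp: A_sp_def exp_shift_mat_def)

theorem lemma5p9:
  fixes L :: "complex set" and p q r :: nat and z :: complex
  assumes "is_lattice L" and "p \<ge> 2" and "q \<ge> 2" and "r \<ge> 1"
    and "of_nat p * of_nat q * z \<notin> L"
  shows "A_sp r p q L z =
           U_mat r p q L (z / of_nat p) * T_sp r p * mat_inv (U_mat r p q L z)"
proof -
  define a where "a = weierstrass_zeta (of_nat q * z) L"
  define b where "b = weierstrass_zeta (of_nat p * of_nat q * z) L"
  have "of_nat p * of_nat q * (z / of_nat p) = of_nat q * z"
    using \<open>p \<ge> 2\<close> by (simp add: field_simps)
  then have "U_mat r p q L (z / of_nat p) = exp_shift_mat r a"
    by (simp add: U_mat_def a_def mat_exp_smult_nilp_N)
  moreover have "mat_inv (U_mat r p q L z) = exp_shift_mat r (- b)"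
    by (simp add: U_mat_def b_def mat_exp_smult_nilp_N mat_inv_exp_shift_mat)
  ultimately have "U_mat r p q L (z / of_nat p) * T_sp r p * mat_inv (U_mat r p q L z) =
      T_sp r p * exp_shift_mat r (of_nat p * a) * exp_shift_mat r (- b)"
    by (simp add: exp_shift_mat_mult_T_sp)
  also have "\<dots> = T_sp r p * exp_shift_mat r (of_nat p * a - b)"
    by (simp add: assoc_mult_mat[of _ r r _ r _ r] T_sp_def exp_shift_mat_add)
  also have "\<dots> = A_sp r p q L z"
    by (simp add: A_sp_eq_T_sp_mult_exp_shift_mat g_p_def a_def b_def)
  finally show ?thesis by simp
qed

end
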